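(* Let $K$ be a field of characteristic $0$, let $L=\mathcal{L}(x,y)$ be the free Lie algebra over $K$ freely generated by $x,y$, let $\delta$ be the derivation of $L$ with $\delta(x)=0$, $\delta(y)=x$, and $L^\delta=\ker\delta$. Let $f\neq 0$ be an element of $L$ of degree $7$. Then $f\in L^\delta$ if and only if $f$ belongs to the Lie subalgebra of $L$ generated by $x$, $[y,x]$ and $[y,x,x,x,[y,x,y]]-[y,x,x,y,[y,x,x]]$.
   Context: Brackets are left-normed: $[a_1,a_2,\ldots,a_n]=[[\ldots[a_1,a_2],\ldots],a_n]$, and an inner bracket denotes a left-normed element inserted as a single argument. *)

theory Defs
  imports Main
begin

text \<open>Free associative algebra K<x,y>: noncommutative polynomials, represented as
coefficient functions on words over the alphabet bool (False = x, True = y).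
The free Lie algebra L(x,y) is realised (Witt) as the Lie subalgebra of K<x,y>
generated by x and y under the commutator bracket.\<close>

type_synonym 'k ncpoly = "bool list \<Rightarrow> 'k"

definition gen_x :: "'k::field ncpoly" where
  "gen_x w = (if w = [False] then 1 else 0)"

definition gen_y :: "'k::field ncpoly" where
  "gen_y w = (if w = [True] then 1 else 0)"

definition nc_mult :: "'k::field ncpoly \<Rightarrow> 'k ncpoly \<Rightarrow> 'k ncpoly" where
  "nc_mult p q w = (\<Sum>i\<le>length w. p (take i w) * q (drop i w))"

definition lie_br :: "'k::field ncpoly \<Rightarrow> 'k ncpoly \<Rightarrow> 'k ncpoly" where
  "lie_br p q = (\<lambda>w. nc_mult p q w - nc_mult q p w)"

inductive_set lie_span :: "'k::field ncpoly set \<Rightarrow> 'k ncpoly set" for S where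
  gen: "p \<in> S \<Longrightarrow> p \<in> lie_span S"
| zero: "(\<lambda>w. 0) \<in> lie_span S"
| add: "p \<in> lie_span S \<Longrightarrow> q \<in> lie_span S \<Longrightarrow> (\<lambda>w. p w + q w) \<in> lie_span S"
| smult: "p \<in> lie_span S \<Longrightarrow> (\<lambda>w. c * p w) \<in> lie_span S"
| br: "p \<in> lie_span S \<Longrightarrow> q \<in> lie_span S \<Longrightarrow> lie_br p q \<in> lie_span S"

definition free_lie :: "'k::field ncpoly set" where
  "free_lie = lie_span {gen_x, gen_y}"

text \<open>The derivation with delta(x) = 0, delta(y) = x (of K<x,y>, restricting to L):
on a word it sums over all replacements of one letter y by x.  Coefficient form:\<close>
definition delta :: "'k::field ncpoly \<Rightarrow> 'k ncpoly" where
  "delta p u = (\<Sum>i\<in>{i. i < length u \<and> u ! i = False}. p (u[i := True]))"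

definition homog :: "nat \<Rightarrow> 'k::field ncpoly \<Rightarrow> bool" where
  "homog n p \<longleftrightarrow> (\<forall>w. p w \<noteq> 0 \<longrightarrow> length w = n)"

end

(*
  Every element of L of degree 7 is a linear combination of left-normed brackets of seven
  letters, and by antisymmetry those beginning with [y, x] suffice.  Gaussian elimination
  yields, for every word v of length 7, an integer linear relation valid on all of these
  brackets that expresses a nonzero multiple of the coefficient of v through coefficients of
  delta g and the coefficients of g at five fixed pivot words; each relation is checked by
  computing the 32 brackets with integer tries.  So an element of degree 7 in the kernel of
  delta is determined by its five pivot coefficients.  The subalgebra generated by x,
  u = [y, x] and w contains [u,x,x,x,x,x], [[u,x,x,x],u], [[u,x,x],[u,x]], [[u,x,u],u] and w,
  whose pivot coefficients form a nonsingular diagonal matrix, so these five elements span the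
  kernel in degree 7.  Conversely delta is a derivation killing x, u and w, hence it kills the
  subalgebra they generate.
*)

theory Submission
  imports Defs
begin

section \<open>The free associative algebra\<close>

definition lquot :: "bool \<Rightarrow> 'k::field ncpoly \<Rightarrow> 'k ncpoly" where
  "lquot b p = (\<lambda>w. p (b # w))"

lemma nc_mult_Nil: "nc_mult p q [] = p [] * q []"
  by (simp add: nc_mult_def)

lemma nc_mult_Cons: "nc_mult p q (b # w) = p [] * q (b # w) + nc_mult (lquot b p) q w"
  unfolding nc_mult_def lquot_def length_Cons sum.atMost_Suc_shift by simp

lemma nc_mult_add_left: "nc_mult (\<lambda>w. p w + q w) r u = nc_mult p r u + nc_mult q r u"
  by (simp add: nc_mult_def algebra_simps sum.distrib)

lemma nc_mult_add_right: "nc_mult r (\<lambda>w. p w + q w) u = nc_mult r p u + nc_mult r q u"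
  by (simp add: nc_mult_def algebra_simps sum.distrib)

lemma nc_mult_diff_left: "nc_mult (\<lambda>w. p w - q w) r u = nc_mult p r u - nc_mult q r u"
  by (simp add: nc_mult_def algebra_simps sum_subtractf)

lemma nc_mult_diff_right: "nc_mult r (\<lambda>w. p w - q w) u = nc_mult r p u - nc_mult r q u"
  by (simp add: nc_mult_def algebra_simps sum_subtractf)

lemma nc_mult_smult_left: "nc_mult (\<lambda>w. c * p w) r u = c * nc_mult p r u"
  by (simp add: nc_mult_def algebra_simps sum_distrib_left)

lemma nc_mult_smult_right: "nc_mult r (\<lambda>w. c * p w) u = c * nc_mult r p u"
  by (simp add: nc_mult_def algebra_simps sum_distrib_left)

lemma nc_mult_zero_left: "nc_mult (\<lambda>w. 0) r u = 0"
  by (simp add: nc_mult_def)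

lemma nc_mult_zero_right: "nc_mult r (\<lambda>w. 0) u = 0"
  by (simp add: nc_mult_def)

lemma lquot_nc_mult: "lquot b (nc_mult p q) = (\<lambda>w. p [] * lquot b q w + nc_mult (lquot b p) q w)"
  by (simp add: lquot_def nc_mult_Cons fun_eq_iff)

lemma nc_mult_assoc: "nc_mult (nc_mult p q) r u = nc_mult p (nc_mult q r) u"
proof (induction u arbitrary: p q r)
  case Nil
  then show ?case by (simp add: nc_mult_Nil)
next
  case (Cons b u)
  have "nc_mult (lquot b (nc_mult p q)) r u =
      p [] * nc_mult (lquot b q) r u + nc_mult (nc_mult (lquot b p) q) r u"
    by (simp add: lquot_nc_mult nc_mult_add_left nc_mult_smult_left)
  then show ?case
    by (simp add: nc_mult_Cons nc_mult_Nil Cons.IH algebra_simps)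
qed

lemma delta_Nil: "delta p [] = 0"
  by (simp add: delta_def)

lemma delta_Cons: "delta p (b # u) = (if b then 0 else p (True # u)) + delta (lquot b p) u"
proof -
  let ?I = "{i. i < length u \<and> u ! i = False}"
  have positions: "{i. i < length (b # u) \<and> (b # u) ! i = False} = (if b then {} else {0}) \<union> Suc ` ?I"
    by (auto simp: image_def nth_Cons split: nat.splits) (metis Suc_less_eq gr0_implies_Suc)+
  have "delta p (b # u) = (\<Sum>i\<in>(if b then {} else {0}). p ((b # u)[i := True]))
      + (\<Sum>i\<in>Suc ` ?I. p ((b # u)[i := True]))"
    unfolding delta_def positions by (rule sum.union_disjoint) auto
  also have "(\<Sum>i\<in>Suc ` ?I. p ((b # u)[i := True])) = delta (lquot b p) u"
    by (simp add: sum.reindex delta_def lquot_def)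
  finally show ?thesis by simp
qed

lemma delta_add: "delta (\<lambda>w. p w + q w) = (\<lambda>w. delta p w + delta q w)"
  by (simp add: delta_def sum.distrib fun_eq_iff)

lemma delta_diff: "delta (\<lambda>w. p w - q w) = (\<lambda>w. delta p w - delta q w)"
  by (simp add: delta_def sum_subtractf fun_eq_iff)

lemma delta_smult: "delta (\<lambda>w. c * p w) = (\<lambda>w. c * delta p w)"
  by (simp add: delta_def sum_distrib_left fun_eq_iff)

lemma delta_zero: "delta (\<lambda>w. 0) = (\<lambda>w. 0)"
  by (simp add: delta_def fun_eq_iff)

lemma lquot_delta: "lquot b (delta p) = (\<lambda>w. (if b then 0 else p (True # w)) + delta (lquot b p) w)"
  by (simp add: lquot_def delta_Cons fun_eq_iff)

lemma delta_nc_mult: "delta (nc_mult p q) u = nc_mult (delta p) q u + nc_mult p (delta q) u"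
proof (induction u arbitrary: p q)
  case Nil
  then show ?case by (simp add: nc_mult_Nil delta_Nil)
next
  case (Cons b u)
  have expand: "delta (nc_mult p q) (b # u) = (if b then 0 else nc_mult p q (True # u))
      + p [] * delta (lquot b q) u + nc_mult (delta (lquot b p)) q u + nc_mult (lquot b p) (delta q) u"
    by (simp add: delta_Cons lquot_nc_mult delta_add delta_smult Cons.IH)
  show ?case
  proof (cases b)
    case True
    then show ?thesis
      unfolding expand by (simp add: nc_mult_Cons delta_Nil lquot_delta delta_Cons algebra_simps)
  next
    case False
    then show ?thesis
      unfolding expand
      by (simp add: nc_mult_Cons delta_Nil lquot_delta delta_Cons nc_mult_add_left algebra_simps lquot_def)
  qed
qed

lemma lie_br_add_left: "lie_br (\<lambda>w. p w + q w) r = (\<lambda>w. lie_br p r w + lie_br q r w)"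
  by (simp add: lie_br_def fun_eq_iff nc_mult_add_left nc_mult_add_right)

lemma lie_br_add_right: "lie_br r (\<lambda>w. p w + q w) = (\<lambda>w. lie_br r p w + lie_br r q w)"
  by (simp add: lie_br_def fun_eq_iff nc_mult_add_left nc_mult_add_right)

lemma lie_br_smult_left: "lie_br (\<lambda>w. c * p w) r = (\<lambda>w. c * lie_br p r w)"
  by (simp add: lie_br_def fun_eq_iff nc_mult_smult_left nc_mult_smult_right algebra_simps)

lemma lie_br_smult_right: "lie_br r (\<lambda>w. c * p w) = (\<lambda>w. c * lie_br r p w)"
  by (simp add: lie_br_def fun_eq_iff nc_mult_smult_left nc_mult_smult_right algebra_simps)

lemma lie_br_zero_left: "lie_br (\<lambda>w. 0) r = (\<lambda>w. 0)"
  by (simp add: lie_br_def fun_eq_iff nc_mult_zero_left nc_mult_zero_right)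

lemma lie_br_zero_right: "lie_br r (\<lambda>w. 0) = (\<lambda>w. 0)"
  by (simp add: lie_br_def fun_eq_iff nc_mult_zero_left nc_mult_zero_right)

lemma lie_br_self: "lie_br p p = (\<lambda>w. 0)"
  by (simp add: lie_br_def)

lemma lie_br_anticomm: "lie_br q p = (\<lambda>w. - lie_br p q w)"
  by (simp add: lie_br_def)

lemma lie_br_jacobi: "lie_br p (lie_br q r) = (\<lambda>w. lie_br (lie_br p q) r w - lie_br (lie_br p r) q w)"
  unfolding lie_br_def
  by (simp only: nc_mult_diff_left nc_mult_diff_right nc_mult_assoc) (simp add: algebra_simps)

lemma delta_lie_br: "delta (lie_br p q) = (\<lambda>w. lie_br (delta p) q w + lie_br p (delta q) w)"
  unfolding lie_br_def fun_eq_iff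
  by (simp only: delta_diff delta_nc_mult) (simp add: algebra_simps)

lemma delta_gen_x: "delta gen_x = (\<lambda>w. 0)"
proof
  fix u :: "bool list"
  have "u[i := True] \<noteq> [False]" if "i < length u" for i
    using that nth_list_update_eq[of i u True] by (metis length_list_update length_Suc_conv less_Suc0
        nth_Cons_0 list.size(3))
  then show "delta gen_x u = 0"
    by (simp add: delta_def gen_x_def)
qed

lemma delta_gen_y: "delta gen_y = gen_x"
proof
  fix u :: "bool list"
  show "delta gen_y u = gen_x u"
  proof (cases u)
    case Nil
    then show ?thesis by (simp add: delta_Nil gen_x_def)
  next
    case (Cons b v)
    have "delta (lquot b gen_y) v = 0"
      by (simp add: delta_def lquot_def gen_y_def)
    then show ?thesis
      using Cons by (cases b) (simp_all add: delta_Cons gen_x_def gen_y_def)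
  qed
qed

lemma lie_span_diff: "p \<in> lie_span S \<Longrightarrow> q \<in> lie_span S \<Longrightarrow> (\<lambda>w. p w - q w) \<in> lie_span S"
  using lie_span.add[OF _ lie_span.smult[of q S "-1"]] by simp

lemma lie_span_subset: "S \<subseteq> lie_span T \<Longrightarrow> lie_span S \<subseteq> lie_span T"
proof
  fix q assume "S \<subseteq> lie_span T" "q \<in> lie_span S"
  then show "q \<in> lie_span T"
    by (induction rule: lie_span.induct[OF \<open>q \<in> lie_span S\<close>]) (auto intro: lie_span.intros)
qed

lemma delta_lie_span:
  assumes "\<And>p. p \<in> S \<Longrightarrow> delta p = (\<lambda>w. 0)" and "q \<in> lie_span S"
  shows "delta q = (\<lambda>w. 0)"
  using assms(2)
  by induction (simp_all add: assms(1) delta_zero delta_add delta_smult delta_lie_br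
      lie_br_zero_left lie_br_zero_right)

lemma homog_nc_mult:
  assumes "homog m p" "homog n q"
  shows "homog (m + n) (nc_mult p q)"
  unfolding homog_def
proof (intro allI impI)
  fix w assume "nc_mult p q w \<noteq> 0"
  then obtain i where "i \<le> length w" and "p (take i w) * q (drop i w) \<noteq> 0"
    unfolding nc_mult_def by (meson atMost_iff sum.not_neutral_contains_not_neutral)
  then show "length w = m + n"
    using assms unfolding homog_def by (metis length_append append_take_drop_id mult_eq_0_iff)
qed

lemma homog_lie_br:
  assumes "homog m p" "homog n q" "k = m + n"
  shows "homog k (lie_br p q)"
  using homog_nc_mult[OF assms(1,2)] homog_nc_mult[OF assms(2,1)] assms(3)
  unfolding homog_def lie_br_def by (metis add.commute diff_self)

lemma homog_add: "homog n p \<Longrightarrow> homog n q \<Longrightarrow> homog n (\<lambda>w. p w + q w)"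
  unfolding homog_def by (metis add.right_neutral)

lemma homog_diff: "homog n p \<Longrightarrow> homog n q \<Longrightarrow> homog n (\<lambda>w. p w - q w)"
  unfolding homog_def by (metis diff_self)

lemma homog_smult: "homog n p \<Longrightarrow> homog n (\<lambda>w. c * p w)"
  unfolding homog_def by auto

lemma homog_gen_x: "homog 1 gen_x"
  unfolding homog_def gen_x_def by auto

lemma homog_gen_y: "homog 1 gen_y"
  unfolding homog_def gen_y_def by auto

definition hcomp :: "nat \<Rightarrow> 'k::field ncpoly \<Rightarrow> 'k ncpoly" where
  "hcomp n p = (\<lambda>w. if length w = n then p w else 0)"

lemma hcomp_add: "hcomp n (\<lambda>w. p w + q w) = (\<lambda>w. hcomp n p w + hcomp n q w)"
  by (simp add: hcomp_def fun_eq_iff)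

lemma hcomp_smult: "hcomp n (\<lambda>w. c * p w) = (\<lambda>w. c * hcomp n p w)"
  by (simp add: hcomp_def fun_eq_iff)

lemma hcomp_eq_self: "homog n p \<Longrightarrow> hcomp n p = p"
  by (auto simp: homog_def hcomp_def fun_eq_iff)

lemma nc_mult_hcomp:
  assumes "i \<le> n"
  shows "nc_mult (hcomp i p) (hcomp (n - i) q) w = (if length w = n then p (take i w) * q (drop i w) else 0)"
proof -
  have "nc_mult (hcomp i p) (hcomp (n - i) q) w =
      (\<Sum>j\<le>length w. if j = i then (if length w = n then p (take i w) * q (drop i w) else 0) else 0)"
    unfolding nc_mult_def
  proof (rule sum.cong)
    fix j assume "j \<in> {..length w}"
    then have "j = i \<Longrightarrow> length w - i = n - i \<longleftrightarrow> length w = n"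
      using assms by auto
    then show "hcomp i p (take j w) * hcomp (n - i) q (drop j w) =
        (if j = i then (if length w = n then p (take i w) * q (drop i w) else 0) else 0)"
      using \<open>j \<in> {..length w}\<close> by (auto simp: hcomp_def)
  qed simp
  also have "\<dots> = (if length w = n then p (take i w) * q (drop i w) else 0)"
    using assms by (simp add: sum.delta)
  finally show ?thesis .
qed

lemma hcomp_nc_mult: "hcomp n (nc_mult p q) w = (\<Sum>i\<le>n. nc_mult (hcomp i p) (hcomp (n - i) q) w)"
proof -
  have "(\<Sum>i\<le>n. nc_mult (hcomp i p) (hcomp (n - i) q) w)
      = (\<Sum>i\<le>n. if length w = n then p (take i w) * q (drop i w) else 0)"
    by (rule sum.cong) (simp_all add: nc_mult_hcomp)
  then show ?thesis
    by (simp add: hcomp_def nc_mult_def)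
qed

lemma hcomp_lie_br: "hcomp n (lie_br p q) = (\<lambda>w. \<Sum>i\<le>n. lie_br (hcomp i p) (hcomp (n - i) q) w)"
proof
  fix w
  have "(\<Sum>i\<le>n. nc_mult (hcomp i q) (hcomp (n - i) p) w)
      = (\<Sum>i\<le>n. nc_mult (hcomp (n - i) q) (hcomp i p) w)"
    using sum.atLeastAtMost_rev[of "\<lambda>i. nc_mult (hcomp i q) (hcomp (n - i) p) w" 0 n]
    by (simp add: atLeast0AtMost)
  moreover have "hcomp n (lie_br p q) w = hcomp n (nc_mult p q) w - hcomp n (nc_mult q p) w"
    by (simp add: hcomp_def lie_br_def)
  ultimately show "hcomp n (lie_br p q) w = (\<Sum>i\<le>n. lie_br (hcomp i p) (hcomp (n - i) q) w)"
    by (simp add: hcomp_nc_mult lie_br_def sum_subtractf)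
qed

definition letter :: "bool \<Rightarrow> 'k::field ncpoly" where
  "letter b = (if b then gen_y else gen_x)"

fun left_normed :: "bool list \<Rightarrow> 'k::field ncpoly" where
  "left_normed [] = (\<lambda>w. 0)"
| "left_normed (a # w) = foldl (\<lambda>p b. lie_br p (letter b)) (letter a) w"

lemma left_normed_snoc: "w \<noteq> [] \<Longrightarrow> left_normed (w @ [b]) = lie_br (left_normed w) (letter b)"
  by (cases w) simp_all

lemma foldl_lie_br_zero: "foldl (\<lambda>p b. lie_br p (letter b)) (\<lambda>w. 0) t = (\<lambda>w. 0)"
  by (induction t) (simp_all add: lie_br_zero_left)

lemma foldl_lie_br_smult:
  "foldl (\<lambda>p b. lie_br p (letter b)) (\<lambda>w. c * p w) t = (\<lambda>w. c * foldl (\<lambda>p b. lie_br p (letter b)) p t w)"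
  by (induction t arbitrary: p) (simp_all add: lie_br_smult_left)

lemma left_normed_Cons_Cons_same: "left_normed (a # a # t) = (\<lambda>w. 0)"
  by (simp add: lie_br_self foldl_lie_br_zero)

lemma left_normed_x_y: "left_normed (False # True # t) = (\<lambda>w. -1 * left_normed (True # False # t) w)"
  using foldl_lie_br_smult[of "-1" "lie_br gen_y gen_x" t]
  by (simp add: letter_def lie_br_anticomm[of gen_x])

inductive_set left_normed_span :: "nat \<Rightarrow> 'k::field ncpoly set" for n where
  zero: "(\<lambda>w. 0) \<in> left_normed_span n"
| add: "p \<in> left_normed_span n \<Longrightarrow> q \<in> left_normed_span n \<Longrightarrow> (\<lambda>w. p w + q w) \<in> left_normed_span n"
| smult: "p \<in> left_normed_span n \<Longrightarrow> (\<lambda>w. c * p w) \<in> left_normed_span n"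
| gen: "length w = n \<Longrightarrow> left_normed w \<in> left_normed_span n"

lemma left_normed_span_diff:
  "p \<in> left_normed_span n \<Longrightarrow> q \<in> left_normed_span n \<Longrightarrow> (\<lambda>w. p w - q w) \<in> left_normed_span n"
  using left_normed_span.add[OF _ left_normed_span.smult[of q n "-1"]] by simp

lemma left_normed_span_sum:
  "finite I \<Longrightarrow> (\<And>i. i \<in> I \<Longrightarrow> F i \<in> left_normed_span n) \<Longrightarrow> (\<lambda>w. \<Sum>i\<in>I. F i w) \<in> left_normed_span n"
  by (induction I rule: finite_induct) (simp_all add: left_normed_span.zero left_normed_span.add)

lemma lie_br_letter_left_normed_span:
  "p \<in> left_normed_span n \<Longrightarrow> lie_br p (letter b) \<in> left_normed_span (Suc n)"
proof (induction rule: left_normed_span.induct)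
  case (gen w)
  then show ?case
    by (cases "w = []") (simp_all add: lie_br_zero_left left_normed_span.zero
        left_normed_snoc[symmetric] left_normed_span.gen)
qed (simp_all add: lie_br_zero_left lie_br_add_left lie_br_smult_left left_normed_span.intros)

lemma lie_br_left_normed:
  "u \<noteq> [] \<Longrightarrow> lie_br (left_normed u) (left_normed v :: 'k::field ncpoly) \<in> left_normed_span (length u + length v)"
proof (induction v arbitrary: u rule: rev_induct)
  case Nil
  then show ?case by (simp add: lie_br_zero_right left_normed_span.zero)
next
  case (snoc b v u)
  show ?case
  proof (cases "v = []")
    case True
    then show ?thesis
      using snoc.prems left_normed_span.gen[of "u @ [b]"] by (simp add: left_normed_snoc)
  next
    case False
    \<comment> \<open>Jacobi: \<open>[U, [V, b]] = [[U, V], b] - [[U, b], V]\<close>; induction covers \<open>[U, V]\<close> and \<open>[U b, V]\<close>.\<close>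
    have "lie_br (left_normed u) (left_normed (v @ [b]) :: 'k ncpoly) =
        (\<lambda>w. lie_br (lie_br (left_normed u) (left_normed v)) (letter b) w
           - lie_br (left_normed (u @ [b])) (left_normed v) w)"
      using False snoc.prems by (simp add: left_normed_snoc lie_br_jacobi)
    moreover have "lie_br (lie_br (left_normed u) (left_normed v)) (letter b :: 'k ncpoly)
        \<in> left_normed_span (Suc (length u + length v))"
      using snoc.IH[OF snoc.prems] by (rule lie_br_letter_left_normed_span)
    moreover have "lie_br (left_normed (u @ [b])) (left_normed v :: 'k ncpoly)
        \<in> left_normed_span (Suc (length u + length v))"
      using snoc.IH[of "u @ [b]"] by simp
    ultimately show ?thesis
      by (simp add: left_normed_span_diff)
  qed
qed

lemma lie_br_left_normed_span:
  assumes "p \<in> left_normed_span i" and "q \<in> left_normed_span j"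
  shows "lie_br p q \<in> left_normed_span (i + j)"
  using assms
proof (induction p rule: left_normed_span.induct)
  case (gen u)
  from gen.prems show ?case
  proof (induction q rule: left_normed_span.induct)
    case (gen v)
    then show ?case
      using lie_br_left_normed[of u v] \<open>length u = i\<close>
      by (cases "u = []") (simp_all add: lie_br_zero_left left_normed_span.zero)
  qed (simp_all add: lie_br_zero_right lie_br_add_right lie_br_smult_right left_normed_span.intros)
qed (simp_all add: lie_br_zero_left lie_br_add_left lie_br_smult_left left_normed_span.intros)

lemma hcomp_free_lie: "p \<in> free_lie \<Longrightarrow> hcomp n p \<in> left_normed_span n"
  unfolding free_lie_def
proof (induction arbitrary: n rule: lie_span.induct)
  case (gen p)
  then have "hcomp n p = (if n = 1 then left_normed [p = gen_y] else (\<lambda>w. 0))"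
    by (auto simp: fun_eq_iff hcomp_def gen_x_def gen_y_def letter_def)
  then show ?case
    using left_normed_span.gen[of "[p = gen_y]" 1] by (auto simp: left_normed_span.zero)
next
  case zero
  then show ?case by (simp add: hcomp_def left_normed_span.zero)
next
  case (add p q)
  then show ?case by (simp add: hcomp_add left_normed_span.add)
next
  case (smult p c)
  then show ?case by (simp add: hcomp_smult left_normed_span.smult)
next
  case (br p q)
  have "lie_br (hcomp i p) (hcomp (n - i) q) \<in> left_normed_span n" if "i \<le> n" for i
    using lie_br_left_normed_span[OF br.IH(1)[of i] br.IH(2)[of "n - i"]] that by simp
  then show ?case
    unfolding hcomp_lie_br by (intro left_normed_span_sum) auto
qed

section \<open>Integer tries\<close>

text \<open>\<open>ZNode a l r\<close> represents the polynomial \<open>a + x l + y r\<close>.\<close>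

datatype ztrie = ZLeaf | ZNode int ztrie ztrie

fun ztrie_lookup :: "ztrie \<Rightarrow> bool list \<Rightarrow> int" where
  "ztrie_lookup ZLeaf w = 0"
| "ztrie_lookup (ZNode a l r) [] = a"
| "ztrie_lookup (ZNode a l r) (b # w) = ztrie_lookup (if b then r else l) w"

fun ztrie_add :: "ztrie \<Rightarrow> ztrie \<Rightarrow> ztrie" where
  "ztrie_add ZLeaf t = t"
| "ztrie_add s ZLeaf = s"
| "ztrie_add (ZNode a l r) (ZNode b l' r') = ZNode (a + b) (ztrie_add l l') (ztrie_add r r')"

fun ztrie_smult :: "int \<Rightarrow> ztrie \<Rightarrow> ztrie" where
  "ztrie_smult c ZLeaf = ZLeaf"
| "ztrie_smult c (ZNode a l r) = ZNode (c * a) (ztrie_smult c l) (ztrie_smult c r)"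

definition ztrie_cons :: "bool \<Rightarrow> ztrie \<Rightarrow> ztrie" where
  "ztrie_cons b t = (if b then ZNode 0 ZLeaf t else ZNode 0 t ZLeaf)"

fun ztrie_mult :: "ztrie \<Rightarrow> ztrie \<Rightarrow> ztrie" where
  "ztrie_mult ZLeaf t = ZLeaf"
| "ztrie_mult (ZNode a l r) t =
     ztrie_add (ztrie_smult a t) (ztrie_add (ztrie_cons False (ztrie_mult l t)) (ztrie_cons True (ztrie_mult r t)))"

definition ztrie_br :: "ztrie \<Rightarrow> ztrie \<Rightarrow> ztrie" where
  "ztrie_br s t = ztrie_add (ztrie_mult s t) (ztrie_smult (-1) (ztrie_mult t s))"

fun ztrie_delta :: "ztrie \<Rightarrow> ztrie" where
  "ztrie_delta ZLeaf = ZLeaf"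
| "ztrie_delta (ZNode a l r) = ZNode 0 (ztrie_add (ztrie_delta l) r) (ztrie_delta r)"

definition ztrie_letter :: "bool \<Rightarrow> ztrie" where
  "ztrie_letter b = ztrie_cons b (ZNode 1 ZLeaf ZLeaf)"

fun ztrie_left_normed :: "bool list \<Rightarrow> ztrie" where
  "ztrie_left_normed [] = ZLeaf"
| "ztrie_left_normed (a # w) = foldl (\<lambda>t b. ztrie_br t (ztrie_letter b)) (ztrie_letter a) w"

definition poly_of_ztrie :: "ztrie \<Rightarrow> 'k::field ncpoly" where
  "poly_of_ztrie t = (\<lambda>w. of_int (ztrie_lookup t w))"

lemma ztrie_lookup_add: "ztrie_lookup (ztrie_add s t) w = ztrie_lookup s w + ztrie_lookup t w"
  by (induction s t arbitrary: w rule: ztrie_add.induct; case_tac w; simp)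

lemma ztrie_lookup_smult: "ztrie_lookup (ztrie_smult c t) w = c * ztrie_lookup t w"
  by (induction t arbitrary: w; case_tac w; simp)

lemma ztrie_lookup_cons:
  "ztrie_lookup (ztrie_cons b t) w = (case w of [] \<Rightarrow> 0 | c # w' \<Rightarrow> if c = b then ztrie_lookup t w' else 0)"
  by (cases w) (auto simp: ztrie_cons_def)

lemma ztrie_lookup_letter: "ztrie_lookup (ztrie_letter b) w = (if w = [b] then 1 else 0)"
  by (cases w rule: remdups_adj.cases) (auto simp: ztrie_letter_def ztrie_cons_def)

lemma poly_of_ztrie_ZLeaf: "poly_of_ztrie ZLeaf = (\<lambda>w. 0)"
  by (simp add: poly_of_ztrie_def)

lemma poly_of_ztrie_Nil: "poly_of_ztrie (ZNode a l r) [] = of_int a"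
  by (simp add: poly_of_ztrie_def)

lemma poly_of_ztrie_Cons: "poly_of_ztrie (ZNode a l r) (b # w) = poly_of_ztrie (if b then r else l) w"
  by (simp add: poly_of_ztrie_def)

lemma lquot_poly_of_ztrie: "lquot b (poly_of_ztrie (ZNode a l r)) = poly_of_ztrie (if b then r else l)"
  by (simp add: poly_of_ztrie_def lquot_def fun_eq_iff)

lemma poly_of_ztrie_add: "poly_of_ztrie (ztrie_add s t) = (\<lambda>w. poly_of_ztrie s w + poly_of_ztrie t w)"
  by (simp add: poly_of_ztrie_def ztrie_lookup_add fun_eq_iff)

lemma poly_of_ztrie_smult: "poly_of_ztrie (ztrie_smult c t) = (\<lambda>w. of_int c * poly_of_ztrie t w)"
  by (simp add: poly_of_ztrie_def ztrie_lookup_smult fun_eq_iff)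

lemma nc_mult_poly_of_ztrie:
  "nc_mult (poly_of_ztrie s) (poly_of_ztrie t) w = (poly_of_ztrie (ztrie_mult s t) w :: 'k::field)"
proof (induction s arbitrary: w)
  case ZLeaf
  then show ?case by (simp add: poly_of_ztrie_ZLeaf nc_mult_zero_left)
next
  case (ZNode a l r)
  show ?case
  proof (cases w)
    case Nil
    then show ?thesis
      by (simp add: poly_of_ztrie_def ztrie_lookup_add ztrie_lookup_smult ztrie_lookup_cons nc_mult_Nil)
  next
    case (Cons b w')
    have "nc_mult (poly_of_ztrie (ZNode a l r)) (poly_of_ztrie t) w
        = (of_int a :: 'k) * poly_of_ztrie t w + poly_of_ztrie (ztrie_mult (if b then r else l) t) w'"
      using Cons ZNode.IH[of w'] by (cases b) (simp_all add: nc_mult_Cons lquot_poly_of_ztrie poly_of_ztrie_Nil)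
    also have "\<dots> = poly_of_ztrie (ztrie_mult (ZNode a l r) t) w"
      using Cons by (cases b) (simp_all add: poly_of_ztrie_def ztrie_lookup_add ztrie_lookup_smult ztrie_lookup_cons)
    finally show ?thesis .
  qed
qed

lemma lie_br_poly_of_ztrie: "lie_br (poly_of_ztrie s) (poly_of_ztrie t) = poly_of_ztrie (ztrie_br s t)"
  by (simp add: lie_br_def ztrie_br_def poly_of_ztrie_add poly_of_ztrie_smult nc_mult_poly_of_ztrie fun_eq_iff)

lemma diff_poly_of_ztrie:
  "(\<lambda>w. poly_of_ztrie s w - poly_of_ztrie t w) = poly_of_ztrie (ztrie_add s (ztrie_smult (-1) t))"
  by (simp add: poly_of_ztrie_add poly_of_ztrie_smult)

lemma delta_poly_of_ztrie: "delta (poly_of_ztrie t) = poly_of_ztrie (ztrie_delta t)"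
proof
  fix w
  show "delta (poly_of_ztrie t) w = poly_of_ztrie (ztrie_delta t) w"
  proof (induction t arbitrary: w)
    case ZLeaf
    then show ?case by (simp add: poly_of_ztrie_ZLeaf delta_zero)
  next
    case (ZNode a l r)
    then show ?case
      by (cases w; cases "hd w") (simp_all add: delta_Nil delta_Cons lquot_poly_of_ztrie poly_of_ztrie_Nil
          poly_of_ztrie_Cons poly_of_ztrie_add)
  qed
qed

lemma letter_eq_poly_of_ztrie: "letter b = poly_of_ztrie (ztrie_letter b)"
  by (simp add: fun_eq_iff letter_def gen_x_def gen_y_def poly_of_ztrie_def ztrie_lookup_letter)

lemma gen_x_eq_poly_of_ztrie: "gen_x = poly_of_ztrie (ztrie_letter False)"
  and gen_y_eq_poly_of_ztrie: "gen_y = poly_of_ztrie (ztrie_letter True)"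
  using letter_eq_poly_of_ztrie[of False] letter_eq_poly_of_ztrie[of True] by (simp_all add: letter_def)

lemma left_normed_eq_poly_of_ztrie: "left_normed w = poly_of_ztrie (ztrie_left_normed w)"
proof (cases w)
  case Nil
  then show ?thesis by (simp add: poly_of_ztrie_ZLeaf)
next
  case (Cons a t)
  have "foldl (\<lambda>p b. lie_br p (letter b)) (poly_of_ztrie s) t
      = poly_of_ztrie (foldl (\<lambda>s b. ztrie_br s (ztrie_letter b)) s t)" for s
    by (induction t arbitrary: s) (simp_all add: letter_eq_poly_of_ztrie lie_br_poly_of_ztrie)
  then show ?thesis
    using Cons by (simp add: letter_eq_poly_of_ztrie)
qed

lemma map_poly_of_ztrie: "map (poly_of_ztrie t) ws = map of_int (map (ztrie_lookup t) ws)"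
  by (simp add: poly_of_ztrie_def)

section \<open>A certificate for the kernel of \<open>delta\<close> in degree 7\<close>

definition lin_form :: "(bool list \<times> int) list \<Rightarrow> (bool list \<Rightarrow> 'a::ring_1) \<Rightarrow> 'a" where
  "lin_form cs p = (\<Sum>(u, c)\<leftarrow>cs. of_int c * p u)"

lemma lin_form_add: "lin_form cs (\<lambda>w. p w + q w) = lin_form cs p + lin_form cs q"
  by (induction cs) (auto simp: lin_form_def algebra_simps)

lemma lin_form_smult: "lin_form cs (\<lambda>w. k * p w) = k * lin_form cs (p :: _ \<Rightarrow> 'a::comm_ring_1)"
  by (induction cs) (auto simp: lin_form_def algebra_simps)

lemma lin_form_of_int: "lin_form cs (\<lambda>w. of_int (p w)) = of_int (lin_form cs p)"
  by (induction cs) (auto simp: lin_form_def)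

lemma lin_form_eq_0: "\<forall>(u, c)\<in>set cs. p u = 0 \<Longrightarrow> lin_form cs p = 0"
  by (induction cs) (auto simp: lin_form_def)

type_synonym cert_row = "bool list \<times> int \<times> (bool list \<times> int) list \<times> (bool list \<times> int) list"

text \<open>In a row, \<open>p\<close> and \<open>dp\<close> stand for the coefficient functions of some \<open>g\<close> and of \<open>delta g\<close>.\<close>

fun row_holds :: "(bool list \<Rightarrow> 'a::comm_ring_1) \<Rightarrow> (bool list \<Rightarrow> 'a) \<Rightarrow> cert_row \<Rightarrow> bool" where
  "row_holds p dp (v, a, ds, bs) \<longleftrightarrow> of_int a * p v = lin_form ds dp + lin_form bs p"

lemma row_holds_of_int:
  "row_holds p dp r \<Longrightarrow> row_holds (\<lambda>w. of_int (p w)) (\<lambda>w. of_int (dp w)) r"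
  by (cases r) (simp add: lin_form_of_int flip: of_int_mult of_int_add)

lemma row_holds_zero: "row_holds (\<lambda>w. 0) (\<lambda>w. 0) r"
  by (cases r) (simp add: lin_form_eq_0)

lemma row_holds_add:
  "row_holds p dp r \<Longrightarrow> row_holds q dq r \<Longrightarrow> row_holds (\<lambda>w. p w + q w) (\<lambda>w. dp w + dq w) r"
  by (cases r) (simp add: lin_form_add algebra_simps)

lemma row_holds_smult: "row_holds p dp r \<Longrightarrow> row_holds (\<lambda>w. k * p w) (\<lambda>w. k * dp w) r"
  by (cases r) (simp add: lin_form_smult algebra_simps)

definition word :: "string \<Rightarrow> bool list" where
  "word = map (\<lambda>c. c = CHR ''y'')"

definition pivots :: "bool list list" where
  "pivots = map word [''xxxxxxy'', ''xxxxyxy'', ''xxxyyxx'', ''yxxxyxy'', ''xxxyxyy'']"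

definition cert :: "cert_row list" where
  "cert = map (\<lambda>(v, a, ds, bs). (word v, a, map (apfst word) ds, map (apfst word) bs)) [
    (''xxxxxxx'', 1, [], []),
    (''xxxxxxy'', 1, [], [(''xxxxxxy'', 1)]),
    (''xxxxxyx'', 1, [], [(''xxxxxxy'', -6)]),
    (''xxxxxyy'', 1, [(''xxxxxxy'', -1)], []),
    (''xxxxyxx'', 1, [], [(''xxxxxxy'', 15)]),
    (''xxxxyxy'', 1, [], [(''xxxxyxy'', 1)]),
    (''xxxxyyx'', 1, [(''xxxxxxy'', 5)], [(''xxxxyxy'', -1)]),
    (''xxxxyyy'', 2, [(''xxxxxyy'', -1)], []),
    (''xxxyxxx'', 1, [], [(''xxxxxxy'', -20)]),
    (''xxxyxxy'', 1, [(''xxxxxxy'', 10)], [(''xxxxyxy'', -4), (''xxxyyxx'', 1)]),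
    (''xxxyxyx'', 1, [(''xxxxxxy'', -20)], [(''xxxxyxy'', 4), (''xxxyyxx'', -2)]),
    (''xxxyxyy'', 1, [], [(''xxxyxyy'', 1)]),
    (''xxxyyxx'', 1, [], [(''xxxyyxx'', 1)]),
    (''xxxyyxy'', 2, [(''xxxxxyy'', -1), (''xxxxyxy'', -2)], [(''xxxyxyy'', -4)]),
    (''xxxyyyx'', 2, [(''xxxxxyy'', 5), (''xxxxyxy'', 2)], [(''xxxyxyy'', 2)]),
    (''xxxyyyy'', 3, [(''xxxxyyy'', -1)], []),
    (''xxyxxxx'', 1, [], [(''xxxxxxy'', 15)]),
    (''xxyxxxy'', 1, [(''xxxxxxy'', -20)], [(''xxxxyxy'', 6), (''xxxyyxx'', -4)]),
    (''xxyxxyx'', 1, [(''xxxxxxy'', 30)], [(''xxxxyxy'', -6), (''xxxyyxx'', 9)]),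
    (''xxyxxyy'', 1, [(''xxxxxyy'', 11), (''xxxxyxy'', 4), (''xxxyxxy'', 1)], [(''xxxyxyy'', -2)]),
    (''xxyxyxx'', 1, [], [(''xxxyyxx'', -6)]),
    (''xxyxyxy'', 3, [(''xxxxxyy'', -42), (''xxxxyxy'', -12), (''xxxyxxy'', -4)], [(''xxxyxyy'', 12), (''yxxxyxy'', 1)]),
    (''xxyxyyx'', 3, [(''xxxxxyy'', -24), (''xxxxyxy'', -12), (''xxxyxxy'', -2)], [(''xxxyxyy'', -9), (''yxxxyxy'', -1)]),
    (''xxyxyyy'', 6, [(''xxxxyyy'', -22), (''xxxyxyy'', -12), (''xxyxxyy'', -3)], []),
    (''xxyyxxx'', 1, [], [(''xxxyyxx'', 1)]),
    (''xxyyxxy'', 6, [(''xxxxxyy'', -51), (''xxxxyxy'', -30), (''xxxyxxy'', -10)], [(''xxxyxyy'', -6), (''yxxxyxy'', -2)]),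
    (''xxyyxyx'', 6, [(''xxxxxyy'', 195), (''xxxxyxy'', 102), (''xxxyxxy'', 28)], [(''xxxyxyy'', 24), (''yxxxyxy'', 2)]),
    (''xxyyxyy'', 6, [(''xxxxyyy'', 64), (''xxxyxyy'', 30), (''xxyxxyy'', 9)], []),
    (''xxyyyxx'', 1, [(''xxxxxyy'', -16), (''xxxxyxy'', -8), (''xxxyxxy'', -2)], [(''xxxyxyy'', -2)]),
    (''xxyyyxy'', 6, [(''xxxxyyy'', -65), (''xxxyxyy'', -30), (''xxxyyxy'', -3), (''xxyxxyy'', -9)], []),
    (''xxyyyyx'', 6, [(''xxxxyyy'', 29), (''xxxyxyy'', 12), (''xxxyyxy'', 3), (''xxyxxyy'', 3)], []),
    (''xxyyyyy'', 4, [(''xxxyyyy'', -1)], []),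
    (''xyxxxxx'', 1, [], [(''xxxxxxy'', -6)]),
    (''xyxxxxy'', 1, [(''xxxxxxy'', 20)], [(''xxxxyxy'', -5), (''xxxyyxx'', 5)]),
    (''xyxxxyx'', 1, [(''xxxxxxy'', -40)], [(''xxxxyxy'', 8), (''xxxyyxx'', -12)]),
    (''xyxxxyy'', 2, [(''xxxxxyy'', -31), (''xxxxyxy'', -14), (''xxxyxxy'', -4)], [(''xxxyxyy'', 2)]),
    (''xyxxyxx'', 1, [(''xxxxxxy'', 30)], [(''xxxxyxy'', -6), (''xxxyyxx'', 9)]),
    (''xyxxyxy'', 3, [(''xxxxxyy'', 45), (''xxxxyxy'', 18), (''xxxyxxy'', 4)], [(''xxxyxyy'', -6), (''yxxxyxy'', -4)]),
    (''xyxxyyx'', 6, [(''xxxxxyy'', 57), (''xxxxyxy'', 42), (''xxxyxxy'', 16)], [(''xxxyxyy'', 18), (''yxxxyxy'', 8)]),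
    (''xyxxyyy'', 6, [(''xxxxyyy'', 71), (''xxxyxyy'', 30), (''xxxyyxy'', 3), (''xxyxxyy'', 6)], []),
    (''xyxyxxx'', 1, [(''xxxxxxy'', -20)], [(''xxxxyxy'', 4), (''xxxyyxx'', -2)]),
    (''xyxyxxy'', 3, [(''xxxxxyy'', 99), (''xxxxyxy'', 54), (''xxxyxxy'', 20)], [(''xxxyxyy'', 6), (''yxxxyxy'', 7)]),
    (''xyxyxyx'', 3, [(''xxxxxyy'', -204), (''xxxxyxy'', -120), (''xxxyxxy'', -40)], [(''xxxyxyy'', -24), (''yxxxyxy'', -8)]),
    (''xyxyxyy'', 6, [(''xxxxyyy'', -221), (''xxxyxyy'', -102), (''xxxyyxy'', -21), (''xxyxxyy'', -30), (''xxyxyxy'', -6)], []),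
    (''xyxyyxx'', 6, [(''xxxxxyy'', 195), (''xxxxyxy'', 102), (''xxxyxxy'', 28)], [(''xxxyxyy'', 24), (''yxxxyxy'', 2)]),
    (''xyxyyxy'', 3, [(''xxxxyyy'', 167), (''xxxyxyy'', 90), (''xxxyyxy'', 33), (''xxyxxyy'', 33), (''xxyxyxy'', 12)], []),
    (''xyxyyyx'', 6, [(''xxxxyyy'', -211), (''xxxyxyy'', -114), (''xxxyyxy'', -51), (''xxyxxyy'', -42), (''xxyxyxy'', -18)], []),
    (''xyxyyyy'', 3, [(''xxxyyyy'', -14), (''xxyxyyy'', -7), (''xxyyyxy'', 1)], []),
    (''xyyxxxx'', 1, [(''xxxxxxy'', 5)], [(''xxxxyxy'', -1)]),
    (''xyyxxxy'', 2, [(''xxxxxyy'', -17), (''xxxxyxy'', -10), (''xxxyxxy'', -4)], [(''xxxyxyy'', -2), (''yxxxyxy'', -2)]),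
    (''xyyxxyx'', 6, [(''xxxxxyy'', 57), (''xxxxyxy'', 42), (''xxxyxxy'', 16)], [(''xxxyxyy'', 18), (''yxxxyxy'', 8)]),
    (''xyyxxyy'', 3, [(''xxxxyyy'', 25), (''xxxyxyy'', 15), (''xxxyyxy'', 6), (''xxyxxyy'', 6), (''xxyxyxy'', 3)], []),
    (''xyyxyxx'', 3, [(''xxxxxyy'', -24), (''xxxxyxy'', -12), (''xxxyxxy'', -2)], [(''xxxyxyy'', -9), (''yxxxyxy'', -1)]),
    (''xyyxyxy'', 6, [(''xxxxyyy'', -313), (''xxxyxyy'', -198), (''xxxyyxy'', -93), (''xxyxxyy'', -84), (''xxyxyxy'', -42)], []),
    (''xyyxyyx'', 1, [(''xxxxyyy'', 51), (''xxxyxyy'', 30), (''xxxyyxy'', 15), (''xxyxxyy'', 12), (''xxyxyxy'', 6)], []),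
    (''xyyxyyy'', 12, [(''xxxyyyy'', 221), (''xxyxyyy'', 100), (''xxyyyxy'', -16)], []),
    (''xyyyxxx'', 2, [(''xxxxxyy'', 5), (''xxxxyxy'', 2)], [(''xxxyxyy'', 2)]),
    (''xyyyxxy'', 6, [(''xxxxyyy'', 160), (''xxxyxyy'', 96), (''xxxyyxy'', 42), (''xxyxxyy'', 39), (''xxyxyxy'', 18)], []),
    (''xyyyxyx'', 6, [(''xxxxyyy'', -211), (''xxxyxyy'', -114), (''xxxyyxy'', -51), (''xxyxxyy'', -42), (''xxyxyxy'', -18)], []),
    (''xyyyxyy'', 1, [(''xxxyyyy'', -22), (''xxyxyyy'', -10), (''xxyyyxy'', 2)], []),
    (''xyyyyxx'', 6, [(''xxxxyyy'', 29), (''xxxyxyy'', 12), (''xxxyyxy'', 3), (''xxyxxyy'', 3)], []),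
    (''xyyyyxy'', 12, [(''xxxyyyy'', 175), (''xxyxyyy'', 80), (''xxyyyxy'', -20)], []),
    (''xyyyyyx'', 6, [(''xxxyyyy'', -35), (''xxyxyyy'', -16), (''xxyyyxy'', 4)], []),
    (''xyyyyyy'', 5, [(''xxyyyyy'', -1)], []),
    (''yxxxxxx'', 1, [], [(''xxxxxxy'', 1)]),
    (''yxxxxxy'', 1, [(''xxxxxxy'', -8)], [(''xxxxyxy'', 2), (''xxxyyxx'', -2)]),
    (''yxxxxyx'', 1, [(''xxxxxxy'', 20)], [(''xxxxyxy'', -5), (''xxxyyxx'', 5)]),
    (''yxxxxyy'', 1, [(''xxxxxyy'', 6), (''xxxxyxy'', 3), (''xxxyxxy'', 1)], []),
    (''yxxxyxx'', 1, [(''xxxxxxy'', -20)], [(''xxxxyxy'', 6), (''xxxyyxx'', -4)]),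
    (''yxxxyxy'', 1, [], [(''yxxxyxy'', 1)]),
    (''yxxxyyx'', 2, [(''xxxxxyy'', -17), (''xxxxyxy'', -10), (''xxxyxxy'', -4)], [(''xxxyxyy'', -2), (''yxxxyxy'', -2)]),
    (''yxxxyyy'', 6, [(''xxxxyyy'', -41), (''xxxyxyy'', -18), (''xxxyyxy'', -3), (''xxyxxyy'', -3)], []),
    (''yxxyxxx'', 1, [(''xxxxxxy'', 10)], [(''xxxxyxy'', -4), (''xxxyyxx'', 1)]),
    (''yxxyxxy'', 1, [(''xxxxxyy'', -24), (''xxxxyxy'', -12), (''xxxyxxy'', -4)], [(''yxxxyxy'', -2)]),
    (''yxxyxyx'', 3, [(''xxxxxyy'', 99), (''xxxxyxy'', 54), (''xxxyxxy'', 20)], [(''xxxyxyy'', 6), (''yxxxyxy'', 7)]),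
    (''yxxyxyy'', 2, [(''xxxxyyy'', 53), (''xxxyxyy'', 26), (''xxxyyxy'', 7), (''xxyxxyy'', 7), (''xxyxyxy'', 2)], []),
    (''yxxyyxx'', 6, [(''xxxxxyy'', -51), (''xxxxyxy'', -30), (''xxxyxxy'', -10)], [(''xxxyxyy'', -6), (''yxxxyxy'', -2)]),
    (''yxxyyxy'', 2, [(''xxxxyyy'', -89), (''xxxyxyy'', -50), (''xxxyyxy'', -19), (''xxyxxyy'', -19), (''xxyxyxy'', -8)], []),
    (''yxxyyyx'', 6, [(''xxxxyyy'', 160), (''xxxyxyy'', 96), (''xxxyyxy'', 42), (''xxyxxyy'', 39), (''xxyxyxy'', 18)], []),
    (''yxxyyyy'', 12, [(''xxxyyyy'', 71), (''xxyxyyy'', 28), (''xxyyyxy'', -4)], []),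
    (''yxyxxxx'', 1, [], [(''xxxxyxy'', 1)]),
    (''yxyxxxy'', 1, [], [(''yxxxyxy'', 1)]),
    (''yxyxxyx'', 3, [(''xxxxxyy'', 45), (''xxxxyxy'', 18), (''xxxyxxy'', 4)], [(''xxxyxyy'', -6), (''yxxxyxy'', -4)]),
    (''yxyxxyy'', 3, [(''xxxxyyy'', -46), (''xxxyxyy'', -24), (''xxxyyxy'', -6), (''xxyxxyy'', -6), (''xxyxyxy'', -3)], []),
    (''yxyxyxx'', 3, [(''xxxxxyy'', -42), (''xxxxyxy'', -12), (''xxxyxxy'', -4)], [(''xxxyxyy'', 12), (''yxxxyxy'', 1)]),
    (''yxyxyxy'', 3, [(''xxxxyyy'', 200), (''xxxyxyy'', 120), (''xxxyyxy'', 48), (''xxyxxyy'', 48), (''xxyxyxy'', 24)], []),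
    (''yxyxyyx'', 6, [(''xxxxyyy'', -313), (''xxxyxyy'', -198), (''xxxyyxy'', -93), (''xxyxxyy'', -84), (''xxyxyxy'', -42)], []),
    (''yxyxyyy'', 6, [(''xxxyyyy'', -109), (''xxyxyyy'', -44), (''xxyyyxy'', 8)], []),
    (''yxyyxxx'', 2, [(''xxxxxyy'', -1), (''xxxxyxy'', -2)], [(''xxxyxyy'', -4)]),
    (''yxyyxxy'', 2, [(''xxxxyyy'', -89), (''xxxyxyy'', -50), (''xxxyyxy'', -19), (''xxyxxyy'', -19), (''xxyxyxy'', -8)], []),
    (''yxyyxyx'', 3, [(''xxxxyyy'', 167), (''xxxyxyy'', 90), (''xxxyyxy'', 33), (''xxyxxyy'', 33), (''xxyxyxy'', 12)], []),
    (''yxyyxyy'', 4, [(''xxxyyyy'', 43), (''xxyxyyy'', 20), (''xxyyyxy'', -8)], []),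
    (''yxyyyxx'', 6, [(''xxxxyyy'', -65), (''xxxyxyy'', -30), (''xxxyyxy'', -3), (''xxyxxyy'', -9)], []),
    (''yxyyyxy'', 3, [(''xxxyyyy'', -43), (''xxyxyyy'', -20), (''xxyyyxy'', 8)], []),
    (''yxyyyyx'', 12, [(''xxxyyyy'', 175), (''xxyxyyy'', 80), (''xxyyyxy'', -20)], []),
    (''yxyyyyy'', 5, [(''xxyyyyy'', 6)], []),
    (''yyxxxxx'', 1, [(''xxxxxxy'', -1)], []),
    (''yyxxxxy'', 1, [(''xxxxxyy'', 6), (''xxxxyxy'', 3), (''xxxyxxy'', 1)], []),
    (''yyxxxyx'', 2, [(''xxxxxyy'', -31), (''xxxxyxy'', -14), (''xxxyxxy'', -4)], [(''xxxyxyy'', 2)]),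
    (''yyxxxyy'', 3, [(''xxxxyyy'', 14), (''xxxyxyy'', 6)], []),
    (''yyxxyxx'', 1, [(''xxxxxyy'', 11), (''xxxxyxy'', 4), (''xxxyxxy'', 1)], [(''xxxyxyy'', -2)]),
    (''yyxxyxy'', 3, [(''xxxxyyy'', -46), (''xxxyxyy'', -24), (''xxxyyxy'', -6), (''xxyxxyy'', -6), (''xxyxyxy'', -3)], []),
    (''yyxxyyx'', 3, [(''xxxxyyy'', 25), (''xxxyxyy'', 15), (''xxxyyxy'', 6), (''xxyxxyy'', 6), (''xxyxyxy'', 3)], []),
    (''yyxxyyy'', 4, [(''xxxyyyy'', -11), (''xxyxyyy'', -4)], []),
    (''yyxyxxx'', 1, [], [(''xxxyxyy'', 1)]),
    (''yyxyxxy'', 2, [(''xxxxyyy'', 53), (''xxxyxyy'', 26), (''xxxyyxy'', 7), (''xxyxxyy'', 7), (''xxyxyxy'', 2)], []),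
    (''yyxyxyx'', 6, [(''xxxxyyy'', -221), (''xxxyxyy'', -102), (''xxxyyxy'', -21), (''xxyxxyy'', -30), (''xxyxyxy'', -6)], []),
    (''yyxyxyy'', 2, [(''xxxyyyy'', 33), (''xxyxyyy'', 12)], []),
    (''yyxyyxx'', 6, [(''xxxxyyy'', 64), (''xxxyxyy'', 30), (''xxyxxyy'', 9)], []),
    (''yyxyyxy'', 4, [(''xxxyyyy'', 43), (''xxyxyyy'', 20), (''xxyyyxy'', -8)], []),
    (''yyxyyyx'', 1, [(''xxxyyyy'', -22), (''xxyxyyy'', -10), (''xxyyyxy'', 2)], []),
    (''yyxyyyy'', 1, [(''xxyyyyy'', -3)], []),
    (''yyyxxxx'', 2, [(''xxxxxyy'', -1)], []),
    (''yyyxxxy'', 6, [(''xxxxyyy'', -41), (''xxxyxyy'', -18), (''xxxyyxy'', -3), (''xxyxxyy'', -3)], []),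
    (''yyyxxyx'', 6, [(''xxxxyyy'', 71), (''xxxyxyy'', 30), (''xxxyyxy'', 3), (''xxyxxyy'', 6)], []),
    (''yyyxxyy'', 4, [(''xxxyyyy'', -11), (''xxyxyyy'', -4)], []),
    (''yyyxyxx'', 6, [(''xxxxyyy'', -22), (''xxxyxyy'', -12), (''xxyxxyy'', -3)], []),
    (''yyyxyxy'', 6, [(''xxxyyyy'', -109), (''xxyxyyy'', -44), (''xxyyyxy'', 8)], []),
    (''yyyxyyx'', 12, [(''xxxyyyy'', 221), (''xxyxyyy'', 100), (''xxyyyxy'', -16)], []),
    (''yyyxyyy'', 1, [(''xxyyyyy'', 4)], []),
    (''yyyyxxx'', 3, [(''xxxxyyy'', -1)], []),
    (''yyyyxxy'', 12, [(''xxxyyyy'', 71), (''xxyxyyy'', 28), (''xxyyyxy'', -4)], []),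
    (''yyyyxyx'', 3, [(''xxxyyyy'', -14), (''xxyxyyy'', -7), (''xxyyyxy'', 1)], []),
    (''yyyyxyy'', 1, [(''xxyyyyy'', -3)], []),
    (''yyyyyxx'', 4, [(''xxxyyyy'', -1)], []),
    (''yyyyyxy'', 5, [(''xxyyyyy'', 6)], []),
    (''yyyyyyx'', 5, [(''xxyyyyy'', -1)], []),
    (''yyyyyyy'', 1, [], [])]"

lemma cert_words: "map fst cert = map rev (List.n_lists 7 [False, True])"
  by code_simp

lemma cert_rows_pivotal: "list_all (\<lambda>(v, a, ds, bs). a \<noteq> 0 \<and> list_all (\<lambda>(u, c). u \<in> set pivots) bs) cert"
  by code_simp

lemma cert_holds_on_left_normed_yx:
  "\<forall>t\<in>set (List.n_lists 5 [False, True]). list_all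
     (row_holds (ztrie_lookup (ztrie_left_normed (True # False # t)))
                (ztrie_lookup (ztrie_delta (ztrie_left_normed (True # False # t))))) cert"
  by code_simp

lemma row_holds_left_normed_yx:
  assumes "length t = 5" and "r \<in> set cert"
  shows "row_holds (left_normed (True # False # t)) (delta (left_normed (True # False # t) :: 'k::field ncpoly)) r"
proof -
  let ?T = "ztrie_left_normed (True # False # t)"
  have "t \<in> set (List.n_lists 5 [False, True])"
    using assms(1) by (auto simp: set_n_lists)
  then have "row_holds (ztrie_lookup ?T) (ztrie_lookup (ztrie_delta ?T)) r"
    using cert_holds_on_left_normed_yx assms(2) by (simp only: list_all_iff)
  then show ?thesis
    unfolding left_normed_eq_poly_of_ztrie delta_poly_of_ztrie unfolding poly_of_ztrie_def
    by (rule row_holds_of_int)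
qed

lemma row_holds_left_normed_span:
  fixes g :: "'k::field ncpoly"
  assumes "g \<in> left_normed_span 7" and "r \<in> set cert"
  shows "row_holds g (delta g) r"
  using assms(1)
proof induction
  case zero
  then show ?case
    using row_holds_zero by (simp add: delta_zero)
next
  case (add p q)
  then show ?case
    using row_holds_add by (simp add: delta_add)
next
  case (smult p c)
  then show ?case
    using row_holds_smult by (simp add: delta_smult)
next
  case (gen w)
  then obtain a b t where w: "w = a # b # t" and t: "length t = 5"
    by (cases w; cases "tl w") auto
  note yx = row_holds_left_normed_yx[OF t assms(2), where 'k = 'k]
  consider "b = a" | "a = True" "b = False" | "a = False" "b = True"
    by auto
  then show ?case
  proof cases
    case 1
    then have "left_normed w = (\<lambda>w. 0 :: 'k)"
      by (simp only: w left_normed_Cons_Cons_same)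
    then show ?thesis
      using row_holds_zero by (simp add: delta_zero)
  next
    case 2
    then show ?thesis
      using yx by (simp add: w)
  next
    case 3
    then have "left_normed w = (\<lambda>x. -1 * left_normed (True # False # t) x :: 'k)"
      by (simp only: w left_normed_x_y)
    then show ?thesis
      using row_holds_smult[OF yx, of "-1"] by (simp only: delta_smult)
  qed
qed

lemma cert_row_exists:
  assumes "length v = 7"
  obtains a ds bs where "(v, a, ds, bs) \<in> set cert" and "a \<noteq> 0" and "\<forall>(u, c)\<in>set bs. u \<in> set pivots"
proof -
  have "rev (rev v) \<in> rev ` set (List.n_lists 7 [False, True])"
    using assms by (intro imageI) (auto simp: set_n_lists)
  then have "v \<in> set (map fst cert)"
    unfolding cert_words by simp
  then obtain a ds bs where "(v, a, ds, bs) \<in> set cert"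
    by auto
  with cert_rows_pivotal that show ?thesis
    by (auto simp: list_all_iff)
qed

lemma free_lie_deg7_kernel_determined_by_pivots:
  fixes g :: "'k::field_char_0 ncpoly"
  assumes "g \<in> free_lie" "homog 7 g" "delta g = (\<lambda>w. 0)" "\<forall>v\<in>set pivots. g v = 0"
  shows "g = (\<lambda>w. 0)"
proof
  fix v
  show "g v = 0"
  proof (cases "length v = 7")
    case False
    then show ?thesis
      using assms(2) by (auto simp: homog_def)
  next
    case True
    then obtain a ds bs where row: "(v, a, ds, bs) \<in> set cert" and "a \<noteq> 0"
      and pivotal: "\<forall>(u, c)\<in>set bs. u \<in> set pivots"
      by (rule cert_row_exists)
    have "g \<in> left_normed_span 7"
      using hcomp_free_lie[OF assms(1), of 7] by (simp only: hcomp_eq_self[OF assms(2)])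
    then have "row_holds g (delta g) (v, a, ds, bs)"
      using row by (rule row_holds_left_normed_span)
    then have "of_int a * g v = lin_form ds (\<lambda>w. 0) + lin_form bs g"
      using assms(3) by simp
    moreover have "lin_form ds (\<lambda>w. 0) = (0 :: 'k)" and "lin_form bs g = 0"
      using pivotal assms(4) by (auto intro!: lin_form_eq_0)
    ultimately show ?thesis
      using \<open>a \<noteq> 0\<close> by simp
  qed
qed

section \<open>Five elements of degree 7 spanning the kernel\<close>

definition gen_u :: "'k::field ncpoly" where
  "gen_u = lie_br gen_y gen_x"

definition gen_w :: "'k::field ncpoly" where
  "gen_w = (\<lambda>w. lie_br (lie_br (lie_br gen_u gen_x) gen_x) (lie_br gen_u gen_y) w
              - lie_br (lie_br (lie_br gen_u gen_x) gen_y) (lie_br gen_u gen_x) w)"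

definition ux5 :: "'k::field ncpoly" where
  "ux5 = lie_br (lie_br (lie_br (lie_br (lie_br gen_u gen_x) gen_x) gen_x) gen_x) gen_x"

definition ux3_u :: "'k::field ncpoly" where
  "ux3_u = lie_br (lie_br (lie_br (lie_br gen_u gen_x) gen_x) gen_x) gen_u"

definition ux2_ux :: "'k::field ncpoly" where
  "ux2_ux = lie_br (lie_br (lie_br gen_u gen_x) gen_x) (lie_br gen_u gen_x)"

definition uxu_u :: "'k::field ncpoly" where
  "uxu_u = lie_br (lie_br (lie_br gen_u gen_x) gen_u) gen_u"

lemma delta_gen_u: "delta gen_u = (\<lambda>w. 0)"
  by (simp add: gen_u_def delta_lie_br delta_gen_x delta_gen_y lie_br_self lie_br_zero_right)

lemma delta_gen_w: "delta gen_w = (\<lambda>w. 0)"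
  by (simp add: gen_w_def delta_diff delta_lie_br delta_gen_x delta_gen_y delta_gen_u
      lie_br_zero_left lie_br_zero_right)

lemma delta_lie_span_kernel_gens: "q \<in> lie_span {gen_x, gen_u, gen_w} \<Longrightarrow> delta q = (\<lambda>w. 0)"
  by (rule delta_lie_span) (auto simp: delta_gen_x delta_gen_u delta_gen_w)

lemma lie_span_kernel_gens_subset_free_lie: "lie_span {gen_x, gen_u, gen_w} \<subseteq> free_lie"
  unfolding free_lie_def
proof (rule lie_span_subset)
  have "gen_x \<in> lie_span {gen_x, gen_y}" "gen_y \<in> lie_span {gen_x, gen_y}"
    by (auto intro: lie_span.gen)
  then show "{gen_x, gen_u, gen_w} \<subseteq> lie_span {gen_x, gen_y}"
    by (auto simp: gen_u_def gen_w_def intro!: lie_span_diff lie_span.br)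
qed

lemma kernel_basis_in_lie_span:
  "ux5 \<in> lie_span {gen_x, gen_u, gen_w}" "ux3_u \<in> lie_span {gen_x, gen_u, gen_w}"
  "ux2_ux \<in> lie_span {gen_x, gen_u, gen_w}" "uxu_u \<in> lie_span {gen_x, gen_u, gen_w}"
  "gen_w \<in> lie_span {gen_x, gen_u, gen_w}"
  unfolding ux5_def ux3_u_def ux2_ux_def uxu_u_def
  by (intro lie_span.br lie_span.gen; simp)+

lemma homog_gen_u: "homog 2 gen_u"
  unfolding gen_u_def by (rule homog_lie_br[OF homog_gen_y homog_gen_x]) simp

lemma homog_kernel_basis:
  "homog 7 ux5" "homog 7 ux3_u" "homog 7 ux2_ux" "homog 7 uxu_u" "homog 7 gen_w"
  unfolding ux5_def ux3_u_def ux2_ux_def uxu_u_def gen_w_def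
  by (rule homog_lie_br homog_diff homog_gen_x homog_gen_y homog_gen_u | simp)+

lemma kernel_basis_at_pivots:
  "map (ux5 :: 'k::field ncpoly) pivots = map of_int [1, 0, 0, 0, 0]"
  "map (ux3_u :: 'k ncpoly) pivots = map of_int [0, -1, 0, 0, 0]"
  "map (ux2_ux :: 'k ncpoly) pivots = map of_int [0, 0, -1, 0, 0]"
  "map (uxu_u :: 'k ncpoly) pivots = map of_int [0, 0, 0, 3, 0]"
  "map (gen_w :: 'k ncpoly) pivots = map of_int [0, 0, 0, 0, 1]"
  unfolding ux5_def ux3_u_def ux2_ux_def uxu_u_def gen_w_def gen_u_def
  by (simp_all only: gen_x_eq_poly_of_ztrie gen_y_eq_poly_of_ztrie lie_br_poly_of_ztrie
      diff_poly_of_ztrie map_poly_of_ztrie)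
    (rule arg_cong[where f = "map of_int"], code_simp)+

lemma delta_kernel_deg7_subset_lie_span:
  fixes f :: "'k::field_char_0 ncpoly"
  assumes "f \<in> free_lie" and "homog 7 f" and "delta f = (\<lambda>w. 0)"
  shows "f \<in> lie_span {gen_x, gen_u, gen_w}"
proof -
  obtain v1 v2 v3 v4 v5 where pivots: "pivots = [v1, v2, v3, v4, v5]"
    by (simp add: pivots_def)
  define P :: "'k ncpoly" where "P = (\<lambda>w. f v1 * ux5 w - f v2 * ux3_u w - f v3 * ux2_ux w
      + f v4 / 3 * uxu_u w + f v5 * gen_w w)"
  have P: "P \<in> lie_span {gen_x, gen_u, gen_w}"
    unfolding P_def by (intro lie_span.add lie_span_diff lie_span.smult kernel_basis_in_lie_span)
  have "(\<lambda>w. f w - P w) = (\<lambda>w. 0)"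
  proof (rule free_lie_deg7_kernel_determined_by_pivots)
    show "(\<lambda>w. f w - P w) \<in> free_lie"
      using assms(1) P lie_span_kernel_gens_subset_free_lie unfolding free_lie_def
      by (blast intro: lie_span_diff)
    show "homog 7 (\<lambda>w. f w - P w)"
      unfolding P_def by (intro homog_diff homog_add homog_smult assms(2) homog_kernel_basis)
    show "delta (\<lambda>w. f w - P w) = (\<lambda>w. 0)"
      using assms(3) delta_lie_span_kernel_gens[OF P] by (simp add: delta_diff)
    show "\<forall>v\<in>set pivots. f v - P v = 0"
      using kernel_basis_at_pivots[where 'k = 'k] by (simp add: pivots P_def)
  qed
  then have "f = P"
    by (simp add: fun_eq_iff)
  with P show ?thesis
    by simp
qed

theorem proposition5p5:
  fixes f :: "'k::field_char_0 ncpoly"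
  assumes "f \<in> free_lie" and "f \<noteq> (\<lambda>w. 0)" and "homog 7 f"
  shows "delta f = (\<lambda>w. 0) \<longleftrightarrow>
    f \<in> lie_span {gen_x, lie_br gen_y gen_x,
      (\<lambda>w. lie_br (lie_br (lie_br (lie_br gen_y gen_x) gen_x) gen_x)
                    (lie_br (lie_br gen_y gen_x) gen_y) w
          - lie_br (lie_br (lie_br (lie_br gen_y gen_x) gen_x) gen_y)
                    (lie_br (lie_br gen_y gen_x) gen_x) w)}"
  using delta_kernel_deg7_subset_lie_span[OF assms(1,3)] delta_lie_span_kernel_gens
  unfolding gen_w_def gen_u_def by blast

end
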